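(* Let $\alpha\in(0,1)$, $c>0$, $c'>0$, and let $K_\alpha$ be a class of finite simple undirected graphs closed under taking subgraphs such that every $H\in K_\alpha$ with $h$ vertices has a balanced separator of cardinality at most $c\,h^\alpha$. Then there exist constants $C$ and $n_0$ depending only on $\alpha,c,c'$ such that the following holds. Let $G\in K_\alpha$ be connected with $n\ge n_0$ vertices, such that every balanced separator of $G$ has at least $c' n^\alpha$ vertices. Let $\pi_{nd}$ be any nested dissection order of $G$ and $\pi$ any vertex order of $G$. Then each of the following four quantities for $\pi_{nd}$ is at most $C$ times the same quantity for $\pi$: (1) $\max_{v}$ of the number of vertices of $\mathrm{SS}(v)$; (2) $\max_v$ of the number of arcs of $\mathrm{SS}(v)$; (3) the average over all $v\in V$ of the number of vertices of $\mathrm{SS}(v)$; (4) the average over all $v\in V$ of the number of arcs of $\mathrm{SS}(v)$ (search spaces taken in $G_{\pi_{nd}}^\wedge$, respectively $G_\pi^\wedge$).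
   Context: Let $G=(V,E)$ be a finite simple undirected graph with $n=|V|$ vertices. A vertex order is a bijection $\pi:\{1,\dots,n\}\to V$; the rank of $v$ is $\pi^{-1}(v)$. Contracting a vertex $v$ in a graph means deleting $v$ and its incident edges and adding an edge between every pair of former neighbors of $v$ that are not already adjacent. The core graph $G_{\pi,i}$ is obtained from $G$ by contracting $\pi(1),\dots,\pi(i-1)$ in this order. $G_\pi^*$ is the graph on $V$ whose edge set is the union of the edge sets of all $G_{\pi,i}$, $i=1,\dots,n$ (i.e. $G$ together with all edges inserted during the contractions). $G_\pi^\wedge$ is the directed graph obtained from $G_\pi^*$ by orienting every edge from its endpoint of lower rank to its endpoint of higher rank. The search space $\mathrm{SS}(v)$ is the subgraph of $G_\pi^\wedge$ induced by the set of vertices reachable from $v$ in $G_\pi^\wedge$ (including $v$). A balanced separator of a graph with vertex set $V$, $|V|=n$, is a set $S\subseteq V$ such that $V\setminus S$ can be partitioned into sets $A,B$ (possibly empty) with no edge between $A$ and $B$ and $|A|,|B|\le 2n/3$. A nested dissection order of $G$ is defined recursively: if $G$ is empty it is the empty order; otherwise choose a balanced separator $S$ of $G$ of minimum cardinality with corresponding parts $A,B$, give the vertices of $S$ the ranks $n-|S|+1,\dots,n$ in arbitrary order, give the vertices of $A$ the ranks $1,\dots,|A|$ according to a nested dissection order of $G[A]$, and the vertices of $B$ the ranks $|A|+1,\dots,|A|+|B|$ according to a nested dissection order of $G[B]$. *)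

theory Defs
  imports Complex_Main
begin

type_synonym 'a ugraph = "'a set \<times> 'a set set"

definition verts :: "'a ugraph \<Rightarrow> 'a set" where "verts G = fst G"
definition edges :: "'a ugraph \<Rightarrow> 'a set set" where "edges G = snd G"

definition wf_graph :: "'a ugraph \<Rightarrow> bool" where
  "wf_graph G \<longleftrightarrow> finite (verts G) \<and>
     (\<forall>e\<in>edges G. \<exists>x y. e = {x, y} \<and> x \<noteq> y \<and> x \<in> verts G \<and> y \<in> verts G)"

definition subgraph :: "'a ugraph \<Rightarrow> 'a ugraph \<Rightarrow> bool" where
  "subgraph H G \<longleftrightarrow> wf_graph H \<and> verts H \<subseteq> verts G \<and> edges H \<subseteq> edges G"

definition induced :: "'a ugraph \<Rightarrow> 'a set \<Rightarrow> 'a ugraph" where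
  "induced G A = (A, {e \<in> edges G. e \<subseteq> A})"

definition connected_graph :: "'a ugraph \<Rightarrow> bool" where
  "connected_graph G \<longleftrightarrow> (\<forall>u\<in>verts G. \<forall>v\<in>verts G.
      (u, v) \<in> {(x, y). {x, y} \<in> edges G}\<^sup>*)"

definition sep_parts :: "'a ugraph \<Rightarrow> 'a set \<Rightarrow> 'a set \<Rightarrow> 'a set \<Rightarrow> bool" where
  "sep_parts G S A B \<longleftrightarrow> S \<subseteq> verts G \<and> A \<inter> B = {} \<and> A \<union> B = verts G - S \<and>
     (\<forall>a\<in>A. \<forall>b\<in>B. {a, b} \<notin> edges G) \<and>
     real (card A) \<le> 2 * real (card (verts G)) / 3 \<and>
     real (card B) \<le> 2 * real (card (verts G)) / 3"

definition balanced_separator :: "'a ugraph \<Rightarrow> 'a set \<Rightarrow> bool" where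
  "balanced_separator G S \<longleftrightarrow> (\<exists>A B. sep_parts G S A B)"

definition min_balanced_separator :: "'a ugraph \<Rightarrow> 'a set \<Rightarrow> bool" where
  "min_balanced_separator G S \<longleftrightarrow> balanced_separator G S \<and>
     (\<forall>S'. balanced_separator G S' \<longrightarrow> card S \<le> card S')"

text \<open>Vertex orders are represented as lists: position i (0-based) has rank i+1.\<close>
definition vertex_order :: "'a ugraph \<Rightarrow> 'a list \<Rightarrow> bool" where
  "vertex_order G \<pi> \<longleftrightarrow> distinct \<pi> \<and> set \<pi> = verts G"

inductive nd_order :: "'a ugraph \<Rightarrow> 'a list \<Rightarrow> bool" where
  nd_empty: "verts G = {} \<Longrightarrow> nd_order G []"
| nd_step: "\<lbrakk> verts G \<noteq> {}; min_balanced_separator G S; sep_parts G S A B;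
             nd_order (induced G A) la; nd_order (induced G B) lb;
             distinct ls; set ls = S \<rbrakk> \<Longrightarrow> nd_order G (la @ lb @ ls)"

definition contract :: "'a \<Rightarrow> 'a ugraph \<Rightarrow> 'a ugraph" where
  "contract v G = (verts G - {v},
     {e \<in> edges G. v \<notin> e} \<union> {{x, y} | x y. x \<noteq> y \<and> {v, x} \<in> edges G \<and> {v, y} \<in> edges G})"

definition contract_seq :: "'a ugraph \<Rightarrow> 'a list \<Rightarrow> 'a ugraph" where
  "contract_seq G xs = foldl (\<lambda>H v. contract v H) G xs"

text \<open>Core graph G_{pi,i} = contract_seq G (take (i-1) pi); G* edges = union over i = 1..n.\<close>
definition star_edges :: "'a ugraph \<Rightarrow> 'a list \<Rightarrow> 'a set set" where
  "star_edges G \<pi> = (\<Union>k<length \<pi>. edges (contract_seq G (take k \<pi>)))"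

definition up_arcs :: "'a ugraph \<Rightarrow> 'a list \<Rightarrow> ('a \<times> 'a) set" where
  "up_arcs G \<pi> = {(\<pi> ! i, \<pi> ! j) | i j. i < j \<and> j < length \<pi> \<and> {\<pi> ! i, \<pi> ! j} \<in> star_edges G \<pi>}"

definition ss_verts :: "'a ugraph \<Rightarrow> 'a list \<Rightarrow> 'a \<Rightarrow> 'a set" where
  "ss_verts G \<pi> v = {w. (v, w) \<in> (up_arcs G \<pi>)\<^sup>*}"

definition ss_arcs :: "'a ugraph \<Rightarrow> 'a list \<Rightarrow> 'a \<Rightarrow> ('a \<times> 'a) set" where
  "ss_arcs G \<pi> v = up_arcs G \<pi> \<inter> (ss_verts G \<pi> v \<times> ss_verts G \<pi> v)"

definition max_ss_verts :: "'a ugraph \<Rightarrow> 'a list \<Rightarrow> real" where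
  "max_ss_verts G \<pi> = real (Max ((\<lambda>v. card (ss_verts G \<pi> v)) ` verts G))"

definition max_ss_arcs :: "'a ugraph \<Rightarrow> 'a list \<Rightarrow> real" where
  "max_ss_arcs G \<pi> = real (Max ((\<lambda>v. card (ss_arcs G \<pi> v)) ` verts G))"

definition avg_ss_verts :: "'a ugraph \<Rightarrow> 'a list \<Rightarrow> real" where
  "avg_ss_verts G \<pi> = (\<Sum>v\<in>verts G. real (card (ss_verts G \<pi> v))) / real (card (verts G))"

definition avg_ss_arcs :: "'a ugraph \<Rightarrow> 'a list \<Rightarrow> real" where
  "avg_ss_arcs G \<pi> = (\<Sum>v\<in>verts G. real (card (ss_arcs G \<pi> v))) / real (card (verts G))"

definition subgraph_closed :: "'a ugraph set \<Rightarrow> bool" where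
  "subgraph_closed K \<longleftrightarrow> (\<forall>G\<in>K. wf_graph G) \<and> (\<forall>G\<in>K. \<forall>H. subgraph H G \<longrightarrow> H \<in> K)"

end

theory Submission
  imports Defs
begin

text \<open>Contracting the first vertices of an order leaves exactly the fill edges: pairs of
  remaining vertices joined by a path through contracted ones. Hence \<open>w\<close> lies in the search
  space of \<open>v\<close> iff some path from \<open>v\<close> to \<open>w\<close> runs through vertices ranked below \<open>w\<close>.

  For a nested dissection order such a path starting in one part cannot reach the other part
  without entering the top separator, so the search space of \<open>v\<close> is covered by its search space
  inside the part plus the separator; the resulting recurrence gives
  \<open>|SS(v)| \<le> c n\<^bsup>\<alpha>\<^esup> / (1 - (2/3)\<^bsup>\<alpha>\<^esup>)\<close>, and at most the square of this many arcs.

  For an arbitrary order, look at the first prefix whose induced graph has a component \<open>D\<close>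
  with at least \<open>n/3\<close> vertices. The last vertex of that prefix together with the boundary
  \<open>N\<close> of \<open>D\<close> is a balanced separator, so \<open>|N| \<ge> c' n\<^bsup>\<alpha>\<^esup> - 1\<close>, while every vertex of \<open>D\<close>
  reaches all of \<open>N\<close> through \<open>D\<close> and sees every pair of \<open>N\<close> as an arc. So a third of all
  search spaces have \<open>\<Omega>(n\<^bsup>\<alpha>\<^esup>)\<close> vertices and \<open>\<Omega>(n\<^bsup>2\<alpha>\<^esup>)\<close> arcs, matching the upper bounds.\<close>

section \<open>Paths through a vertex set and contraction\<close>

text \<open>\<open>inner_path E X x y\<close>: a path of at least one edge from \<open>x\<close> to \<open>y\<close> whose inner
  vertices lie in \<open>X\<close>; the endpoints themselves are unconstrained.\<close>
inductive inner_path :: "'a set set \<Rightarrow> 'a set \<Rightarrow> 'a \<Rightarrow> 'a \<Rightarrow> bool" for E X where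
  edge: "{x, y} \<in> E \<Longrightarrow> inner_path E X x y"
| step: "{x, z} \<in> E \<Longrightarrow> z \<in> X \<Longrightarrow> inner_path E X z y \<Longrightarrow> inner_path E X x y"

lemma inner_path_mono: "inner_path E X x y \<Longrightarrow> X \<subseteq> Y \<Longrightarrow> inner_path E Y x y"
  by (induction rule: inner_path.induct) (auto intro: inner_path.intros)

lemma inner_path_trans:
  "inner_path E X x z \<Longrightarrow> z \<in> X \<Longrightarrow> inner_path E X z y \<Longrightarrow> inner_path E X x y"
  by (induction rule: inner_path.induct) (auto intro: inner_path.intros)

lemma inner_path_sym: "inner_path E X x y \<Longrightarrow> inner_path E X y x"
proof (induction rule: inner_path.induct)
  case (edge x y)
  then show ?case by (simp add: insert_commute inner_path.edge)
next
  case (step x z y)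
  then have "inner_path E X z x"
    by (simp add: insert_commute inner_path.edge)
  with step show ?case
    using inner_path_trans by metis
qed

lemma inner_path_empty_iff: "inner_path E {} x y \<longleftrightarrow> {x, y} \<in> E"
  by (auto elim: inner_path.cases intro: inner_path.edge)

lemma inner_path_insert_iff:
  "inner_path E (insert v X) x y \<longleftrightarrow>
     inner_path E X x y \<or> (inner_path E X x v \<and> inner_path E X v y)"
proof
  show "inner_path E (insert v X) x y \<Longrightarrow>
      inner_path E X x y \<or> (inner_path E X x v \<and> inner_path E X v y)"
  proof (induction rule: inner_path.induct)
    case (step x z y)
    then show ?case
      by (cases "z = v") (auto intro: inner_path.intros)
  qed (simp add: inner_path.edge)
next
  assume "inner_path E X x y \<or> (inner_path E X x v \<and> inner_path E X v y)"
  then show "inner_path E (insert v X) x y"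
    by (metis inner_path_mono inner_path_trans insertI1 subset_insertI)
qed

lemma inner_path_insert_source: "inner_path E (insert x X) x y \<Longrightarrow> inner_path E X x y"
  using inner_path_insert_iff [of E x X x y] by blast

lemma inner_path_first_exit:
  "inner_path E X x y \<Longrightarrow>
     inner_path E Y x y \<or> (\<exists>z\<in>X - Y. inner_path E Y x z \<and> inner_path E X z y)"
proof (induction rule: inner_path.induct)
  case (step x z y)
  then show ?case
    by (cases "z \<in> Y") (auto intro: inner_path.intros)
qed (simp add: inner_path.edge)

lemma inner_path_restrict:
  assumes "inner_path E X x y" "x \<in> P" "X \<subseteq> P \<union> Q" "y \<in> P \<union> Q"
    and "\<forall>a\<in>P. \<forall>b\<in>Q. {a, b} \<notin> E"
  shows "y \<in> P \<and> inner_path {e \<in> E. e \<subseteq> P} (X \<inter> P) x y"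
  using assms
proof (induction rule: inner_path.induct)
  case (edge x y)
  then show ?case by (auto intro: inner_path.edge)
next
  case (step x z y)
  then have "z \<in> P" by blast
  with step show ?case by (auto intro: inner_path.step)
qed

definition fill_edges :: "'a set \<Rightarrow> 'a set set \<Rightarrow> 'a set \<Rightarrow> 'a set set" where
  "fill_edges V E X =
     {{x, y} | x y. x \<noteq> y \<and> x \<in> V - X \<and> y \<in> V - X \<and> inner_path E X x y}"

lemma doubleton_in_fill_edges_iff:
  "{x, y} \<in> fill_edges V E X \<longleftrightarrow> x \<noteq> y \<and> x \<in> V - X \<and> y \<in> V - X \<and> inner_path E X x y"
  unfolding fill_edges_def by (auto simp: doubleton_eq_iff dest: inner_path_sym)

lemma fill_edges_elem: "e \<in> fill_edges V E X \<Longrightarrow> \<exists>x y. e = {x, y} \<and> {x, y} \<in> fill_edges V E X"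
  unfolding fill_edges_def by blast

lemma wf_graph_edge:
  assumes "wf_graph G" "{x, y} \<in> edges G"
  shows "x \<noteq> y \<and> x \<in> verts G \<and> y \<in> verts G"
  using assms unfolding wf_graph_def by (fastforce simp: doubleton_eq_iff)

lemma fill_edges_empty: "wf_graph G \<Longrightarrow> fill_edges (verts G) (edges G) {} = edges G"
  unfolding fill_edges_def inner_path_empty_iff wf_graph_def by fastforce

lemma fill_edges_insert:
  assumes v: "v \<in> V - X"
  shows "{e \<in> fill_edges V E X. v \<notin> e} \<union>
      {{x, y} | x y. x \<noteq> y \<and> {v, x} \<in> fill_edges V E X \<and> {v, y} \<in> fill_edges V E X}
    = fill_edges V E (insert v X)" (is "?L = ?R")
proof -
  let ?F = "fill_edges V E X"
  have "?L \<subseteq> ?R"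
  proof
    fix e assume "e \<in> ?L"
    then consider x y where "e = {x, y}" "{x, y} \<in> ?F" "v \<notin> e"
      | x y where "e = {x, y}" "x \<noteq> y" "{v, x} \<in> ?F" "{v, y} \<in> ?F"
      by (blast dest: fill_edges_elem)
    then show "e \<in> ?R"
    proof cases
      case 1
      then show ?thesis
        by (auto simp: doubleton_in_fill_edges_iff intro: inner_path_mono)
    next
      case 2
      then show ?thesis
        using v by (auto simp: doubleton_in_fill_edges_iff inner_path_insert_iff
            intro: inner_path_sym)
    qed
  qed
  moreover have "?R \<subseteq> ?L"
  proof
    fix e assume "e \<in> ?R"
    then obtain x y where e: "e = {x, y}" and xy: "{x, y} \<in> ?R"
      by (blast dest: fill_edges_elem)
    then have "inner_path E X x y \<or> (inner_path E X x v \<and> inner_path E X v y)"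
      by (simp add: doubleton_in_fill_edges_iff inner_path_insert_iff)
    then show "e \<in> ?L"
    proof
      assume "inner_path E X x y"
      then show ?thesis
        using e xy by (auto simp: doubleton_in_fill_edges_iff)
    next
      assume "inner_path E X x v \<and> inner_path E X v y"
      then have "{v, x} \<in> ?F" "{v, y} \<in> ?F"
        using v xy by (auto simp: doubleton_in_fill_edges_iff intro: inner_path_sym)
      then show ?thesis
        using e xy by (auto simp: doubleton_in_fill_edges_iff)
    qed
  qed
  ultimately show ?thesis
    by (rule equalityI)
qed

lemma contract_fill_graph:
  assumes "v \<in> V - X"
  shows "contract v (V - X, fill_edges V E X) = (V - insert v X, fill_edges V E (insert v X))"
proof -
  have "V - X - {v} = V - insert v X"
    by blast
  then show ?thesis
    using fill_edges_insert [OF assms] by (simp add: contract_def verts_def edges_def)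
qed

lemma contract_seq_fill_graph:
  assumes wf: "wf_graph G" and "distinct xs" "set xs \<subseteq> verts G"
  shows "contract_seq G xs = (verts G - set xs, fill_edges (verts G) (edges G) (set xs))"
  using assms(2,3)
proof (induction xs rule: rev_induct)
  case Nil
  have "G = (verts G, edges G)" by (simp add: verts_def edges_def)
  then show ?case
    using fill_edges_empty [OF wf] by (simp add: contract_seq_def)
next
  case (snoc v xs)
  then show ?case
    by (simp add: contract_seq_def contract_fill_graph)
qed

section \<open>Search spaces of a vertex order\<close>

definition rank :: "'a list \<Rightarrow> 'a \<Rightarrow> nat" where
  "rank xs v = (THE i. i < length xs \<and> xs ! i = v)"

lemma rank_nth: "distinct xs \<Longrightarrow> i < length xs \<Longrightarrow> rank xs (xs ! i) = i"
  unfolding rank_def by (auto intro!: the_equality simp: nth_eq_iff_index_eq)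

lemma rank_less_length: "distinct xs \<Longrightarrow> v \<in> set xs \<Longrightarrow> rank xs v < length xs"
  by (metis in_set_conv_nth rank_nth)

lemma nth_rank: "distinct xs \<Longrightarrow> v \<in> set xs \<Longrightarrow> xs ! rank xs v = v"
  by (metis in_set_conv_nth rank_nth)

lemma rank_eq_iff: "distinct xs \<Longrightarrow> a \<in> set xs \<Longrightarrow> b \<in> set xs \<Longrightarrow> rank xs a = rank xs b \<longleftrightarrow> a = b"
  by (metis nth_rank)

lemma set_take_eq_rank_less: "distinct xs \<Longrightarrow> set (take k xs) = {u \<in> set xs. rank xs u < k}"
proof (intro set_eqI iffI)
  fix u
  assume "distinct xs" "u \<in> set (take k xs)"
  then show "u \<in> {u \<in> set xs. rank xs u < k}"
    by (auto simp: in_set_conv_nth rank_nth)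
next
  fix u
  assume "distinct xs" "u \<in> {u \<in> set xs. rank xs u < k}"
  then show "u \<in> set (take k xs)"
    by (metis (mono_tags, lifting) in_set_conv_nth length_take mem_Collect_eq min_less_iff_conj
        nth_rank nth_take rank_less_length)
qed

lemma rank_append_left: "distinct (xs @ ys) \<Longrightarrow> u \<in> set xs \<Longrightarrow> rank (xs @ ys) u = rank xs u"
  by (metis distinct_append length_append nth_append_left nth_rank rank_less_length rank_nth
      trans_less_add1)

lemma rank_append_right:
  "distinct (xs @ ys) \<Longrightarrow> u \<in> set ys \<Longrightarrow> rank (xs @ ys) u = length xs + rank ys u"
  by (metis distinct_append length_append nat_add_left_cancel_less nth_append_length_plus
      nth_rank rank_less_length rank_nth)

lemma rank_append3:
  assumes l: "distinct (la @ lb @ ls)"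
  shows "u \<in> set la \<Longrightarrow> rank (la @ lb @ ls) u = rank la u"
    and "u \<in> set lb \<Longrightarrow> rank (la @ lb @ ls) u = length la + rank lb u"
    and "u \<in> set la \<union> set lb \<Longrightarrow> s \<in> set ls \<Longrightarrow> rank (la @ lb @ ls) u < rank (la @ lb @ ls) s"
proof -
  have lbs: "distinct (lb @ ls)"
    using l by simp
  show la: "u \<in> set la \<Longrightarrow> rank (la @ lb @ ls) u = rank la u" for u
    using rank_append_left [OF l] by simp
  show lb: "u \<in> set lb \<Longrightarrow> rank (la @ lb @ ls) u = length la + rank lb u" for u
    using rank_append_right [OF l, of u] rank_append_left [OF lbs, of u] by simp
  assume u: "u \<in> set la \<union> set lb" and s: "s \<in> set ls"
  have "rank (la @ lb @ ls) s = length la + length lb + rank ls s"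
    using rank_append_right [OF l, of s] rank_append_right [OF lbs, of s] s by simp
  moreover have "rank (la @ lb @ ls) u < length la + length lb"
    using u la lb rank_less_length [of la u] rank_less_length [of lb u] l by auto
  ultimately show "rank (la @ lb @ ls) u < rank (la @ lb @ ls) s"
    by simp
qed

definition lower :: "'a list \<Rightarrow> 'a \<Rightarrow> 'a set" where
  "lower xs w = set (take (rank xs w) xs)"

locale ordered_graph =
  fixes G :: "'a ugraph" and \<pi> :: "'a list"
  assumes wf: "wf_graph G" and order: "vertex_order G \<pi>"
begin

abbreviation "V \<equiv> verts G"
abbreviation "E \<equiv> edges G"
abbreviation "r \<equiv> rank \<pi>"

lemma distinct_order: "distinct \<pi>" and set_order: "set \<pi> = V"
  using order by (auto simp: vertex_order_def)

lemma mem_lower: "u \<in> lower \<pi> w \<longleftrightarrow> u \<in> V \<and> r u < r w"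
  by (simp add: lower_def set_take_eq_rank_less distinct_order set_order)

lemma mem_set_take: "u \<in> set (take k \<pi>) \<longleftrightarrow> u \<in> V \<and> r u < k"
  by (simp add: set_take_eq_rank_less distinct_order set_order)

lemma edges_core_graph: "edges (contract_seq G (take k \<pi>)) = fill_edges V E (set (take k \<pi>))"
  using contract_seq_fill_graph [OF wf, of "take k \<pi>"] distinct_order set_order
    set_take_subset [of k \<pi>]
  by (simp add: edges_def)

text \<open>The fill edges present when \<open>a\<close> is contracted are those through vertices
  contracted earlier, i.e. ranked below \<open>a\<close>.\<close>
lemma up_arc_iff:
  "(a, b) \<in> up_arcs G \<pi> \<longleftrightarrow> a \<in> V \<and> b \<in> V \<and> r a < r b \<and> inner_path E (lower \<pi> a) a b"
proof
  assume "(a, b) \<in> up_arcs G \<pi>"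
  then obtain i j k where ij: "a = \<pi> ! i" "b = \<pi> ! j" "i < j" "j < length \<pi>"
    and k: "{a, b} \<in> fill_edges V E (set (take k \<pi>))"
    unfolding up_arcs_def star_edges_def edges_core_graph by blast
  have ab: "a \<in> V" "b \<in> V" "r a < r b"
    using ij nth_mem [of i \<pi>] nth_mem [of j \<pi>] set_order rank_nth [OF distinct_order, of i]
      rank_nth [OF distinct_order, of j] by simp_all
  have "a \<notin> set (take k \<pi>)" and path: "inner_path E (set (take k \<pi>)) a b"
    using k by (simp_all add: doubleton_in_fill_edges_iff)
  then have "set (take k \<pi>) \<subseteq> lower \<pi> a"
    using ab(1) by (auto simp: mem_set_take mem_lower)
  then show "a \<in> V \<and> b \<in> V \<and> r a < r b \<and> inner_path E (lower \<pi> a) a b"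
    using ab inner_path_mono [OF path] by simp
next
  assume ab: "a \<in> V \<and> b \<in> V \<and> r a < r b \<and> inner_path E (lower \<pi> a) a b"
  have "a \<notin> lower \<pi> a" "b \<notin> lower \<pi> a"
    using ab by (auto simp: mem_lower)
  then have "{a, b} \<in> edges (contract_seq G (take (r a) \<pi>))"
    using ab by (auto simp: edges_core_graph doubleton_in_fill_edges_iff lower_def)
  moreover have "r b < length \<pi>" "\<pi> ! r a = a" "\<pi> ! r b = b"
    using ab set_order rank_less_length [OF distinct_order, of b] nth_rank [OF distinct_order, of a]
      nth_rank [OF distinct_order, of b] by simp_all
  ultimately have "(\<pi> ! r a, \<pi> ! r b) \<in> up_arcs G \<pi>"
    using ab unfolding up_arcs_def star_edges_def
    by (intro CollectI exI [of _ "r a"] exI [of _ "r b"]) auto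
  then show "(a, b) \<in> up_arcs G \<pi>"
    using \<open>\<pi> ! r a = a\<close> \<open>\<pi> ! r b = b\<close> by simp
qed

lemma reachable_imp_inner_path:
  "(v, w) \<in> (up_arcs G \<pi>)\<^sup>* \<Longrightarrow> v \<noteq> w \<Longrightarrow>
     v \<in> V \<and> w \<in> V \<and> r v < r w \<and> inner_path E (lower \<pi> w) v w"
proof (induction rule: rtrancl_induct)
  case (step a b)
  then have ab: "a \<in> V" "b \<in> V" "r a < r b" and path_ab: "inner_path E (lower \<pi> a) a b"
    by (simp_all add: up_arc_iff)
  then have lower_ab: "lower \<pi> a \<subseteq> lower \<pi> b" "a \<in> lower \<pi> b"
    by (auto simp: mem_lower)
  have path_b: "inner_path E (lower \<pi> b) a b"
    using inner_path_mono [OF path_ab lower_ab(1)] .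
  show ?case
  proof (cases "v = a")
    case True
    then show ?thesis
      using ab path_b by simp
  next
    case False
    then have "v \<in> V" "r v < r a" and path_va: "inner_path E (lower \<pi> a) v a"
      using step.IH by simp_all
    moreover have "inner_path E (lower \<pi> b) v b"
      using inner_path_trans [OF inner_path_mono [OF path_va lower_ab(1)] lower_ab(2) path_b] .
    ultimately show ?thesis
      using ab by simp
  qed
qed simp

text \<open>The first vertex \<open>z\<close> of the path ranked above \<open>v\<close> is joined to \<open>v\<close> by an arc;
  induct on the rank difference for the rest of the path.\<close>
lemma inner_path_imp_reachable:
  "v \<in> V \<Longrightarrow> w \<in> V \<Longrightarrow> r v < r w \<Longrightarrow> inner_path E (lower \<pi> w) v w \<Longrightarrow>
     (v, w) \<in> (up_arcs G \<pi>)\<^sup>*"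
proof (induction "r w - r v" arbitrary: v rule: less_induct)
  case less
  from inner_path_first_exit [OF less.prems(4), of "insert v (lower \<pi> v)"]
  show ?case
  proof
    assume "inner_path E (insert v (lower \<pi> v)) v w"
    then have "(v, w) \<in> up_arcs G \<pi>"
      using less.prems by (simp add: up_arc_iff inner_path_insert_source)
    then show ?thesis by simp
  next
    assume "\<exists>z\<in>lower \<pi> w - insert v (lower \<pi> v).
      inner_path E (insert v (lower \<pi> v)) v z \<and> inner_path E (lower \<pi> w) z w"
    then obtain z where z: "z \<in> lower \<pi> w" "z \<notin> insert v (lower \<pi> v)"
      and vz: "inner_path E (insert v (lower \<pi> v)) v z" and zw: "inner_path E (lower \<pi> w) z w"
      by blast
    have z_V: "z \<in> V" "r z < r w"
      using z(1) by (auto simp: mem_lower)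
    have "r v < r z"
    proof -
      have "z \<noteq> v" "\<not> r z < r v"
        using z(2) z_V by (auto simp: mem_lower)
      then show ?thesis
        using rank_eq_iff [OF distinct_order, of z v] less.prems(1) z_V set_order by auto
    qed
    then have "(v, z) \<in> up_arcs G \<pi>"
      using less.prems(1) z_V(1) vz by (simp add: up_arc_iff inner_path_insert_source)
    moreover have "(z, w) \<in> (up_arcs G \<pi>)\<^sup>*"
      using less.hyps [of z] less.prems(2,3) z_V zw \<open>r v < r z\<close> by simp
    ultimately show ?thesis by simp
  qed
qed

lemma ss_verts_eq:
  assumes v: "v \<in> V"
  shows "ss_verts G \<pi> v = insert v {w \<in> V. r v < r w \<and> inner_path E (lower \<pi> w) v w}"
proof (intro set_eqI iffI)
  fix w
  assume "w \<in> ss_verts G \<pi> v"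
  then show "w \<in> insert v {w \<in> V. r v < r w \<and> inner_path E (lower \<pi> w) v w}"
    using reachable_imp_inner_path [of v w] by (auto simp: ss_verts_def)
next
  fix w
  assume "w \<in> insert v {w \<in> V. r v < r w \<and> inner_path E (lower \<pi> w) v w}"
  then show "w \<in> ss_verts G \<pi> v"
    using inner_path_imp_reachable [of v w] v by (auto simp: ss_verts_def)
qed

lemma ss_verts_subset: "ss_verts G \<pi> v \<subseteq> insert v V"
proof
  fix w
  assume "w \<in> ss_verts G \<pi> v"
  then show "w \<in> insert v V"
    using reachable_imp_inner_path [of v w] by (cases "v = w") (auto simp: ss_verts_def)
qed

lemma finite_ss_verts: "finite (ss_verts G \<pi> v)"
  by (rule finite_subset [OF ss_verts_subset]) (use wf in \<open>simp add: wf_graph_def\<close>)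

lemma finite_ss_arcs: "finite (ss_arcs G \<pi> v)"
  by (rule finite_subset [of _ "ss_verts G \<pi> v \<times> ss_verts G \<pi> v"])
    (auto simp: ss_arcs_def finite_ss_verts)

lemma card_ss_arcs_le: "card (ss_arcs G \<pi> v) \<le> card (ss_verts G \<pi> v) ^ 2"
proof -
  have "card (ss_arcs G \<pi> v) \<le> card (ss_verts G \<pi> v \<times> ss_verts G \<pi> v)"
    using finite_ss_verts by (intro card_mono) (auto simp: ss_arcs_def)
  then show ?thesis by (simp add: card_cartesian_product power2_eq_square)
qed

end

section \<open>Search spaces of nested dissection orders\<close>

lemma verts_induced [simp]: "verts (induced G A) = A"
  by (simp add: induced_def verts_def)

lemma edges_induced [simp]: "edges (induced G A) = {e \<in> edges G. e \<subseteq> A}"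
  by (simp add: induced_def edges_def)

lemma subgraph_induced:
  assumes wf: "wf_graph G" and A: "A \<subseteq> verts G"
  shows "subgraph (induced G A) G"
proof -
  have "finite A"
    using A by (rule finite_subset) (use wf in \<open>simp add: wf_graph_def\<close>)
  moreover have "\<forall>e\<in>edges (induced G A). \<exists>x y. e = {x, y} \<and> x \<noteq> y \<and> x \<in> A \<and> y \<in> A"
  proof
    fix e
    assume e: "e \<in> edges (induced G A)"
    then obtain x y where "e = {x, y}" "x \<noteq> y"
      using wf by (auto simp: wf_graph_def)
    with e show "\<exists>x y. e = {x, y} \<and> x \<noteq> y \<and> x \<in> A \<and> y \<in> A"
      by auto
  qed
  ultimately show ?thesis
    using A by (simp add: subgraph_def wf_graph_def)
qed

lemma vertex_order_nd_order: "nd_order G l \<Longrightarrow> vertex_order G l"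
proof (induction rule: nd_order.induct)
  case (nd_step G S A B la lb ls)
  then show ?case
    by (auto simp: vertex_order_def sep_parts_def)
qed (simp add: vertex_order_def)

lemma ss_verts_restrict:
  assumes wf: "wf_graph G" and l: "vertex_order G l" and lp: "vertex_order (induced G P) lp"
    and parts: "verts G = P \<union> Q \<union> S"
    and no_edges: "\<forall>a\<in>P. \<forall>b\<in>Q. {a, b} \<notin> edges G"
    and S_top: "\<forall>s\<in>S. \<forall>u\<in>P \<union> Q. rank l u < rank l s"
    and ranks: "\<forall>u\<in>P. \<forall>w\<in>P. rank l u < rank l w \<longleftrightarrow> rank lp u < rank lp w"
    and v: "v \<in> P"
  shows "ss_verts G l v \<subseteq> ss_verts (induced G P) lp v \<union> S"
proof
  interpret Gl: ordered_graph G l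
    using wf l by unfold_locales
  have P: "P \<subseteq> verts G"
    using parts by blast
  interpret GP: ordered_graph "induced G P" lp
    using subgraph_induced [OF wf P] lp by unfold_locales (simp_all add: subgraph_def)
  fix w
  assume w: "w \<in> ss_verts G l v"
  show "w \<in> ss_verts (induced G P) lp v \<union> S"
  proof (cases "w = v \<or> w \<in> S")
    case True
    then show ?thesis by (auto simp: ss_verts_def)
  next
    case False
    then have "w \<in> verts G" and vw: "rank l v < rank l w"
      and path: "inner_path (edges G) (lower l w) v w"
      using w Gl.ss_verts_eq [of v] v P by auto
    then have w_PQ: "w \<in> P \<union> Q"
      using False parts by blast
    have "lower l w \<subseteq> P \<union> Q"
    proof
      fix u
      assume "u \<in> lower l w"
      then have "u \<in> verts G" "rank l u < rank l w"
        by (simp_all add: Gl.mem_lower)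
      then show "u \<in> P \<union> Q"
        using S_top w_PQ parts by (metis Un_iff less_asym)
    qed
    from inner_path_restrict [OF path v this w_PQ no_edges]
    have w_P: "w \<in> P" and path_P: "inner_path (edges (induced G P)) (lower l w \<inter> P) v w"
      by simp_all
    moreover have "lower l w \<inter> P = lower lp w"
      using ranks w_P P by (auto simp: Gl.mem_lower GP.mem_lower)
    ultimately show ?thesis
      using GP.ss_verts_eq [of v] v ranks vw by auto
  qed
qed

lemma card_ss_verts_le_part:
  assumes wf: "wf_graph G" and P: "P \<subseteq> verts G" and lp: "vertex_order (induced G P) lp"
    and S: "finite S" and sub: "ss_verts G l v \<subseteq> ss_verts (induced G P) lp v \<union> S"
  shows "card (ss_verts G l v) \<le> card (ss_verts (induced G P) lp v) + card S"
proof -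
  interpret ordered_graph "induced G P" lp
    using subgraph_induced [OF wf P] lp by unfold_locales (simp add: subgraph_def)
  have "card (ss_verts G l v) \<le> card (ss_verts (induced G P) lp v \<union> S)"
    using S sub finite_ss_verts by (intro card_mono) simp_all
  also have "\<dots> \<le> card (ss_verts (induced G P) lp v) + card S"
    by (rule card_Un_le)
  finally show ?thesis .
qed

lemma two_thirds_powr_less_one: "0 < \<alpha> \<Longrightarrow> (2/3 :: real) powr \<alpha> < 1"
  using powr_less_mono2 [of \<alpha> "2/3" 1] by simp

lemma nd_recurrence:
  fixes \<alpha> c p n x s :: real
  assumes "0 < \<alpha>" "0 \<le> c" "0 \<le> p" "p \<le> 2 * n / 3"
    and x: "x \<le> c / (1 - (2/3) powr \<alpha>) * p powr \<alpha>" and s: "s \<le> c * n powr \<alpha>"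
  shows "x + s \<le> c / (1 - (2/3) powr \<alpha>) * n powr \<alpha>"
proof -
  define q where "q = (2/3 :: real) powr \<alpha>"
  have "q < 1"
    unfolding q_def using assms(1) by (rule two_thirds_powr_less_one)
  then have D: "0 \<le> c / (1 - q)" "c / (1 - q) * q + c = c / (1 - q)"
    using assms(2) by (auto simp: field_simps)
  have "p powr \<alpha> \<le> (2/3 * n) powr \<alpha>"
    using assms(1,3,4) by (intro powr_mono2) auto
  also have "\<dots> = q * n powr \<alpha>"
    unfolding q_def using assms(3,4) powr_mult [of "2/3" n \<alpha>] by simp
  finally have "x \<le> c / (1 - q) * (q * n powr \<alpha>)"
    using x mult_left_mono [OF _ D(1)] unfolding q_def by (meson order_trans)
  then have "x + s \<le> (c / (1 - q) * q + c) * n powr \<alpha>"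
    using s by (simp add: algebra_simps)
  then show ?thesis
    using D(2) unfolding q_def by simp
qed

lemma ss_verts_nd_split:
  assumes wf: "wf_graph G" and parts: "sep_parts G S A B"
    and la: "vertex_order (induced G A) la" and lb: "vertex_order (induced G B) lb"
    and ls: "distinct ls" "set ls = S" and v: "v \<in> verts G"
  obtains "v \<in> A" "ss_verts G (la @ lb @ ls) v \<subseteq> ss_verts (induced G A) la v \<union> S"
    | "v \<in> B" "ss_verts G (la @ lb @ ls) v \<subseteq> ss_verts (induced G B) lb v \<union> S"
    | "ss_verts G (la @ lb @ ls) v \<subseteq> S"
proof -
  let ?l = "la @ lb @ ls"
  have sets: "set la = A" "set lb = B"
    using la lb by (auto simp: vertex_order_def)
  have split: "verts G = A \<union> B \<union> S" "A \<inter> B = {}" "(A \<union> B) \<inter> S = {}"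
    and no_edges: "\<forall>a\<in>A. \<forall>b\<in>B. {a, b} \<notin> edges G"
    using parts by (auto simp: sep_parts_def)
  have l: "vertex_order G ?l"
    using la lb ls sets split unfolding vertex_order_def by auto
  then have distinct_l: "distinct ?l"
    by (simp add: vertex_order_def)
  have rank_A: "rank ?l u = rank la u" if "u \<in> A" for u
    using rank_append3(1) [OF distinct_l] that sets by simp
  have rank_B: "rank ?l u = length la + rank lb u" if "u \<in> B" for u
    using rank_append3(2) [OF distinct_l] that sets by simp
  have S_top: "\<forall>s\<in>S. \<forall>u\<in>A \<union> B. rank ?l u < rank ?l s"
    using rank_append3(3) [OF distinct_l] sets ls by simp
  consider "v \<in> A" | "v \<in> B" | "v \<in> S"
    using v split by auto
  then show thesis
  proof cases
    case 1
    have "ss_verts G ?l v \<subseteq> ss_verts (induced G A) la v \<union> S"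
      by (rule ss_verts_restrict [OF wf l la split(1) no_edges S_top _ 1]) (simp add: rank_A)
    with 1 show thesis
      by (rule that(1))
  next
    case 2
    have "verts G = B \<union> A \<union> S" "\<forall>s\<in>S. \<forall>u\<in>B \<union> A. rank ?l u < rank ?l s"
      using split(1) S_top by auto
    moreover have "\<forall>a\<in>B. \<forall>b\<in>A. {a, b} \<notin> edges G"
      using no_edges by (metis insert_commute)
    ultimately have "ss_verts G ?l v \<subseteq> ss_verts (induced G B) lb v \<union> S"
      by (intro ss_verts_restrict [OF wf l lb _ _ _ _ 2]) (simp_all add: rank_B)
    with 2 show thesis
      by (rule that(2))
  next
    case 3
    interpret ordered_graph G ?l
      using wf l by unfold_locales
    have "ss_verts G ?l v \<subseteq> S"
    proof
      fix w
      assume "w \<in> ss_verts G ?l v"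
      then have "w = v \<or> (w \<in> verts G \<and> rank ?l v < rank ?l w)"
        using ss_verts_eq [OF v] by auto
      then show "w \<in> S"
        using 3 split(1) S_top by (metis Un_iff less_asym)
    qed
    then show thesis
      by (rule that(3))
  qed
qed

lemma nd_order_ss_verts_bound:
  fixes \<alpha> c :: real
  assumes K: "subgraph_closed K"
    and sep: "\<forall>H\<in>K. \<exists>S. balanced_separator H S \<and> real (card S) \<le> c * real (card (verts H)) powr \<alpha>"
    and \<alpha>: "0 < \<alpha>" and c: "0 \<le> c"
    and "nd_order G l" "G \<in> K" "v \<in> verts G"
  shows "real (card (ss_verts G l v)) \<le> c / (1 - (2/3) powr \<alpha>) * real (card (verts G)) powr \<alpha>"
  using assms(5-)
proof (induction arbitrary: v rule: nd_order.induct)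
  case (nd_step G S A B la lb ls)
  let ?l = "la @ lb @ ls"
  let ?n = "real (card (verts G))"
  let ?D = "c / (1 - (2/3) powr \<alpha>)"
  have wf: "wf_graph G"
    using K nd_step.prems(1) by (auto simp: subgraph_closed_def)
  have parts: "A \<subseteq> verts G" "B \<subseteq> verts G" "finite S"
    and small: "real (card A) \<le> 2 * ?n / 3" "real (card B) \<le> 2 * ?n / 3"
    using nd_step.hyps(3) wf finite_subset by (auto simp: sep_parts_def wf_graph_def)
  have card_S: "real (card S) \<le> c * ?n powr \<alpha>"
  proof -
    obtain S' where "balanced_separator G S'" "real (card S') \<le> c * ?n powr \<alpha>"
      using sep nd_step.prems(1) by blast
    then show ?thesis
      using nd_step.hyps(2) by (force simp: min_balanced_separator_def)
  qed
  have via_part: "real (card (ss_verts G ?l v)) \<le> ?D * ?n powr \<alpha>"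
    if sub: "ss_verts G ?l v \<subseteq> ss_verts (induced G P) lp v \<union> S"
      and lp: "nd_order (induced G P) lp" and P: "P \<subseteq> verts G"
      and IH: "induced G P \<in> K \<Longrightarrow> real (card (ss_verts (induced G P) lp v)) \<le> ?D * real (card P) powr \<alpha>"
      and small_P: "real (card P) \<le> 2 * ?n / 3"
    for P lp
  proof -
    have "induced G P \<in> K"
      using K nd_step.prems(1) subgraph_induced [OF wf P] unfolding subgraph_closed_def by blast
    moreover have "card (ss_verts G ?l v) \<le> card (ss_verts (induced G P) lp v) + card S"
      using card_ss_verts_le_part [OF wf P vertex_order_nd_order [OF lp] parts(3) sub] .
    ultimately show ?thesis
      using nd_recurrence [OF \<alpha> c _ small_P IH card_S] by linarith
  qed
  have la: "vertex_order (induced G A) la" and lb: "vertex_order (induced G B) lb"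
    using vertex_order_nd_order nd_step.hyps(4,5) by blast+
  from ss_verts_nd_split [OF wf nd_step.hyps(3) la lb nd_step.hyps(6,7) nd_step.prems(2)]
  show ?case
  proof cases
    case 1
    then show ?thesis
      using via_part nd_step.hyps(4) nd_step.IH(1) parts small by auto
  next
    case 2
    then show ?thesis
      using via_part nd_step.hyps(5) nd_step.IH(2) parts small by auto
  next
    case 3
    then have "card (ss_verts G ?l v) \<le> card S"
      using parts(3) by (rule card_mono [rotated])
    moreover have "c * ?n powr \<alpha> \<le> ?D * ?n powr \<alpha>"
      using c two_thirds_powr_less_one [OF \<alpha>] by (intro mult_right_mono) (simp_all add: field_simps)
    ultimately show ?thesis
      using card_S by linarith
  qed
qed simp

section \<open>Balanced separators from components\<close>

definition adj_within :: "'a set set \<Rightarrow> 'a set \<Rightarrow> ('a \<times> 'a) set" where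
  "adj_within E L = {(a, b). {a, b} \<in> E \<and> a \<in> L \<and> b \<in> L}"

definition component :: "'a set set \<Rightarrow> 'a set \<Rightarrow> 'a \<Rightarrow> 'a set" where
  "component E L x = {y. (x, y) \<in> (adj_within E L)\<^sup>*}"

lemma self_in_component: "x \<in> component E L x"
  by (simp add: component_def)

lemma component_subset: "x \<in> L \<Longrightarrow> component E L x \<subseteq> L"
proof
  fix y
  assume "y \<in> component E L x" "x \<in> L"
  then have "(x, y) \<in> (adj_within E L)\<^sup>*" "x \<in> L"
    by (simp_all add: component_def)
  then show "y \<in> L"
    by (induction rule: rtrancl_induct) (simp_all add: adj_within_def)
qed

lemma component_eq: "y \<in> component E L x \<Longrightarrow> component E L y = component E L x"
proof -
  assume "y \<in> component E L x"
  then have xy: "(x, y) \<in> (adj_within E L)\<^sup>*"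
    by (simp add: component_def)
  have "sym ((adj_within E L)\<^sup>*)"
    by (rule sym_rtrancl) (auto simp: sym_def adj_within_def insert_commute)
  then have yx: "(y, x) \<in> (adj_within E L)\<^sup>*"
    using xy by (rule symD)
  show ?thesis
  proof (intro set_eqI iffI)
    fix z
    assume "z \<in> component E L y"
    then show "z \<in> component E L x"
      using rtrancl_trans [OF xy] by (simp add: component_def)
  next
    fix z
    assume "z \<in> component E L x"
    then show "z \<in> component E L y"
      using rtrancl_trans [OF yx] by (simp add: component_def)
  qed
qed

lemma component_mono: "L \<subseteq> L' \<Longrightarrow> component E L x \<subseteq> component E L' x"
proof -
  assume "L \<subseteq> L'"
  then have "adj_within E L \<subseteq> adj_within E L'"
    by (auto simp: adj_within_def)
  then have "(adj_within E L)\<^sup>* \<subseteq> (adj_within E L')\<^sup>*"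
    by (rule rtrancl_mono)
  then show ?thesis
    unfolding component_def by auto
qed

lemma component_edge:
  assumes "a \<in> component E L x" "a \<in> L" "b \<in> L" "{a, b} \<in> E"
  shows "b \<in> component E L x"
proof -
  have "(a, b) \<in> adj_within E L"
    using assms(2-4) by (simp add: adj_within_def)
  with assms(1) show ?thesis
    unfolding component_def by simp
qed

lemma pairwise_disjnt_components: "pairwise disjnt (component E L ` Y)"
proof (rule pairwiseI)
  fix C C'
  assume "C \<in> component E L ` Y" "C' \<in> component E L ` Y" "C \<noteq> C'"
  then obtain y y' where C: "C = component E L y" "C' = component E L y'" and "C \<noteq> C'"
    by blast
  show "disjnt C C'"
  proof (rule ccontr)
    assume "\<not> disjnt C C'"
    then obtain z where "z \<in> C" "z \<in> C'"
      by (auto simp: disjnt_def)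
    then have "C = component E L z" "C' = component E L z"
      using component_eq [of z E L y] component_eq [of z E L y'] C by simp_all
    with \<open>C \<noteq> C'\<close> show False
      by simp
  qed
qed

lemma inner_path_component:
  assumes "y \<in> component E L x" "{y, w} \<in> E"
  shows "inner_path E L x w"
proof -
  have "(x, y) \<in> (adj_within E L)\<^sup>*"
    using assms(1) by (simp add: component_def)
  then show ?thesis
    using assms(2)
  proof (induction rule: converse_rtrancl_induct)
    case base
    then show ?case by (rule inner_path.edge)
  next
    case (step x z)
    then have "{x, z} \<in> E" "z \<in> L" "inner_path E L z w"
      by (simp_all add: adj_within_def)
    then show ?case
      by (rule inner_path.step)
  qed
qed

lemma component_connected_graph:
  assumes wf: "wf_graph G" and conn: "connected_graph G" and x: "x \<in> verts G"
  shows "component (edges G) (verts G) x = verts G"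
proof
  show "component (edges G) (verts G) x \<subseteq> verts G"
    using x by (rule component_subset)
  have "{(a, b). {a, b} \<in> edges G} \<subseteq> adj_within (edges G) (verts G)"
    using wf_graph_edge [OF wf] by (auto simp: adj_within_def)
  then have mono: "{(a, b). {a, b} \<in> edges G}\<^sup>* \<subseteq> (adj_within (edges G) (verts G))\<^sup>*"
    by (rule rtrancl_mono)
  show "verts G \<subseteq> component (edges G) (verts G) x"
  proof
    fix z
    assume "z \<in> verts G"
    then have "(x, z) \<in> {(a, b). {a, b} \<in> edges G}\<^sup>*"
      using conn x unfolding connected_graph_def by blast
    then show "z \<in> component (edges G) (verts G) x"
      using mono by (auto simp: component_def)
  qed
qed


lemma two_bin_packing:
  fixes w :: "'b \<Rightarrow> nat"
  assumes "finite I" "\<forall>i\<in>I. 3 * w i \<le> n" "3 * r \<le> 2 * n" "r + sum w I \<le> n"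
  shows "\<exists>J\<subseteq>I. 3 * (r + sum w J) \<le> 2 * n \<and> 3 * sum w (I - J) \<le> 2 * n"
  using assms
proof (induction I rule: finite_induct)
  case empty
  then show ?case by simp
next
  case (insert i I)
  have sum_insert: "sum w (insert i I) = w i + sum w I"
    using insert.hyps by simp
  then obtain J where J: "J \<subseteq> I" "3 * (r + sum w J) \<le> 2 * n" "3 * sum w (I - J) \<le> 2 * n"
    using insert.IH insert.prems by auto
  have split: "sum w I = sum w J + sum w (I - J)"
    using insert.hyps(1) J(1) by (metis add.commute sum.subset_diff)
  have w_i: "3 * w i \<le> n"
    using insert.prems(1) by simp
  show ?case
  proof (cases "3 * (r + sum w J + w i) \<le> 2 * n")
    case True
    have "insert i I - insert i J = I - J"
      using insert.hyps(2) by blast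
    moreover have "sum w (insert i J) = w i + sum w J"
      using insert.hyps J(1) finite_subset [OF J(1) insert.hyps(1)] by (subst sum.insert) auto
    ultimately have "3 * (r + sum w (insert i J)) \<le> 2 * n"
      and "3 * sum w (insert i I - insert i J) \<le> 2 * n"
      using True J(3) by simp_all
    moreover have "insert i J \<subseteq> insert i I"
      using J(1) by blast
    ultimately show ?thesis
      by blast
  next
    case False
    have "insert i I - J = insert i (I - J)"
      using insert.hyps(2) J(1) by blast
    moreover have "sum w (insert i (I - J)) = w i + sum w (I - J)"
      using insert.hyps by simp
    ultimately have "3 * sum w (insert i I - J) \<le> 2 * n"
      using False w_i insert.prems(3) sum_insert split by simp
    moreover have "J \<subseteq> insert i I"
      using J(1) by blast
    ultimately show ?thesis
      using J(2) by blast
  qed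
qed


lemma Union_components:
  assumes "\<forall>y\<in>Y. component E L y \<subseteq> Y"
  shows "\<Union>(component E L ` Y) = Y"
proof
  show "\<Union>(component E L ` Y) \<subseteq> Y"
    using assms by blast
  show "Y \<subseteq> \<Union>(component E L ` Y)"
  proof
    fix y
    assume "y \<in> Y"
    then show "y \<in> \<Union>(component E L ` Y)"
      using self_in_component [of y E L] by blast
  qed
qed

lemma card_Union_components:
  assumes "finite Y" "\<forall>y\<in>Y. component E L y \<subseteq> Y" "J \<subseteq> component E L ` Y"
  shows "card (\<Union>J) = sum card J"
proof (rule card_Union_disjoint)
  show "pairwise disjnt J"
    using pairwise_subset [OF pairwise_disjnt_components assms(3)] .
  show "finite C" if "C \<in> J" for C
  proof -
    have "C \<subseteq> Y"
      using assms(2,3) that by blast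
    then show ?thesis
      using assms(1) by (rule finite_subset)
  qed
qed

lemma no_edge_between_components:
  assumes C: "C \<in> component E L ` Y" "C' \<in> component E L ` Y" "C \<noteq> C'"
    and ab: "a \<in> C" "b \<in> C'" "a \<in> L" "b \<in> L"
  shows "{a, b} \<notin> E"
proof
  assume "{a, b} \<in> E"
  moreover obtain y where y: "C = component E L y"
    using C(1) by blast
  ultimately have "b \<in> C"
    using component_edge [of a E L y b] ab by simp
  then have "\<not> disjnt C C'"
    using ab(2) by (auto simp: disjnt_def)
  then show False
    using pairwiseD [OF pairwise_disjnt_components C] by blast
qed

lemma balanced_split_components:
  fixes n :: nat
  assumes Y: "finite Y" "Y \<subseteq> L" "\<forall>y\<in>Y. component E L y \<subseteq> Y \<and> 3 * card (component E L y) \<le> n"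
    and R: "finite R" "R \<inter> Y = {}" "3 * card R \<le> 2 * n" "card R + card Y \<le> n"
    and R_Y: "\<forall>a\<in>R. \<forall>b\<in>Y. {a, b} \<notin> E"
  shows "\<exists>A B. A \<inter> B = {} \<and> A \<union> B = R \<union> Y \<and> (\<forall>a\<in>A. \<forall>b\<in>B. {a, b} \<notin> E) \<and>
    3 * card A \<le> 2 * n \<and> 3 * card B \<le> 2 * n"
proof -
  let ?I = "component E L ` Y"
  have comp_Y: "\<forall>y\<in>Y. component E L y \<subseteq> Y"
    using Y(3) by blast
  note union = Union_components [OF comp_Y]
  note card_Union = card_Union_components [OF Y(1) comp_Y]
  have sizes: "\<forall>C\<in>?I. 3 * card C \<le> n"
    using Y(3) by auto
  have "card R + sum card ?I \<le> n"
    using R(4) union card_Union [OF order_refl] by simp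
  then obtain J where J: "J \<subseteq> ?I" "3 * (card R + sum card J) \<le> 2 * n"
      "3 * sum card (?I - J) \<le> 2 * n"
    using two_bin_packing [OF finite_imageI [OF Y(1)] sizes R(3)] by blast
  have J_Y: "\<Union>J \<subseteq> Y" "\<Union>(?I - J) \<subseteq> Y"
    using J(1) union by blast+
  have no_edge: "{a, b} \<notin> E" if a: "a \<in> \<Union>J" and b: "b \<in> \<Union>(?I - J)" for a b
  proof -
    obtain C C' where C: "C \<in> J" "C' \<in> ?I - J" "a \<in> C" "b \<in> C'"
      using a b by blast
    moreover have "a \<in> L" "b \<in> L"
      using a b J_Y Y(2) by blast+
    ultimately show ?thesis
      using J(1) by (intro no_edge_between_components [of C E L Y C']) auto
  qed
  have disj: "\<Union>J \<inter> \<Union>(?I - J) = {}"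
  proof (rule equals0I)
    fix z
    assume "z \<in> \<Union>J \<inter> \<Union>(?I - J)"
    then obtain C C' where C: "C \<in> J" "C' \<in> ?I - J" "z \<in> C" "z \<in> C'"
      by blast
    then have "disjnt C C'"
      using pairwiseD [OF pairwise_disjnt_components, of C E L Y C'] J(1) by blast
    then show False
      using C by (auto simp: disjnt_def)
  qed
  have card_A: "card (R \<union> \<Union>J) = card R + card (\<Union>J)"
    using card_Un_disjoint [OF R(1) finite_subset [OF J_Y(1) Y(1)]] R(2) J_Y(1) by blast
  have "J \<union> (?I - J) = ?I"
    using J(1) by blast
  then have union_J: "\<Union>J \<union> \<Union>(?I - J) = Y"
    using union by (metis Union_Un_distrib)
  show ?thesis
  proof (intro exI conjI)
    show "(R \<union> \<Union>J) \<inter> \<Union>(?I - J) = {}"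
      using R(2) J_Y(2) disj by blast
    show "(R \<union> \<Union>J) \<union> \<Union>(?I - J) = R \<union> Y"
      using union_J by blast
    show "\<forall>a\<in>R \<union> \<Union>J. \<forall>b\<in>\<Union>(?I - J). {a, b} \<notin> E"
      using R_Y J_Y(2) no_edge by blast
    show "3 * card (R \<union> \<Union>J) \<le> 2 * n"
      using card_A J(2) card_Union [OF J(1)] by simp
    show "3 * card (\<Union>(?I - J)) \<le> 2 * n"
      using J(3) card_Union [of "?I - J"] by simp
  qed
qed

definition boundary :: "'a ugraph \<Rightarrow> 'a set \<Rightarrow> 'a set" where
  "boundary G D = {w \<in> verts G - D. \<exists>d\<in>D. {d, w} \<in> edges G}"

lemma component_subset_component_insert:
  assumes u: "u \<notin> L" and y: "y \<in> component E (insert u L) x - {u}" and x: "x \<in> insert u L"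
  shows "component E L y \<subseteq> component E (insert u L) x - {u}"
proof -
  have y_D: "y \<in> component E (insert u L) x" and "y \<noteq> u"
    using y by simp_all
  moreover have "y \<in> insert u L"
    using component_subset [OF x] y_D by (rule subsetD)
  ultimately have "y \<in> L"
    by simp
  have "component E L y \<subseteq> component E (insert u L) y"
    by (rule component_mono) (rule subset_insertI)
  also have "\<dots> = component E (insert u L) x"
    using y_D by (rule component_eq)
  finally have "component E L y \<subseteq> component E (insert u L) x" .
  moreover have "u \<notin> component E L y"
    using component_subset [OF \<open>y \<in> L\<close>] u by blast
  ultimately show ?thesis
    by blast
qed

lemma no_edge_beyond_boundary:
  assumes "a \<in> verts G - D - boundary G D" "b \<in> D"
  shows "{a, b} \<notin> edges G"
proof
  assume "{a, b} \<in> edges G"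
  then have "{b, a} \<in> edges G"
    by (simp add: insert_commute)
  then have "a \<in> boundary G D"
    using assms by (auto simp: boundary_def)
  then show False
    using assms(1) by blast
qed

lemma card_outside_large_set:
  assumes "finite V" "D \<subseteq> V" "card V \<le> 3 * card D"
  shows "3 * card (V - D - S) \<le> 2 * card V"
proof -
  have "card (V - D - S) \<le> card (V - D)"
    using assms(1) by (intro card_mono) auto
  also have "\<dots> = card V - card D"
    using card_Diff_subset [OF finite_subset [OF assms(2,1)] assms(2)] .
  finally show ?thesis
    using assms(3) by linarith
qed

text \<open>The components of \<open>L\<close> inside \<open>D - {u}\<close> are small and can be packed greedily
  into two sides of a separator.\<close>
lemma balanced_separator_boundary:
  assumes wf: "wf_graph G" and L: "insert u L \<subseteq> verts G" "u \<notin> L"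
    and D: "D = component (edges G) (insert u L) x" "x \<in> insert u L"
      "card (verts G) \<le> 3 * card D"
    and small: "\<forall>y\<in>L. 3 * card (component (edges G) L y) \<le> card (verts G)"
  shows "balanced_separator G (insert u (boundary G D))"
proof -
  let ?V = "verts G" and ?E = "edges G" and ?S = "insert u (boundary G D)"
  let ?Y = "D - {u}" and ?R = "verts G - D - insert u (boundary G D)"
  have fin: "finite ?V"
    using wf by (simp add: wf_graph_def)
  have D_sub: "D \<subseteq> insert u L"
    unfolding D(1) using D(2) by (rule component_subset)
  then have D_V: "D \<subseteq> ?V" and Y_L: "?Y \<subseteq> L"
    using L(1) by blast+
  have comp_Y: "\<forall>y\<in>?Y. component ?E L y \<subseteq> ?Y \<and> 3 * card (component ?E L y) \<le> card ?V"
  proof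
    fix y
    assume y: "y \<in> ?Y"
    then have "component ?E L y \<subseteq> ?Y"
      using component_subset_component_insert [OF L(2), of y ?E x] D(1,2) by simp
    moreover have "y \<in> L"
      using y Y_L by blast
    ultimately show "component ?E L y \<subseteq> ?Y \<and> 3 * card (component ?E L y) \<le> card ?V"
      using small by simp
  qed
  have fin_R: "finite ?R" and fin_Y: "finite ?Y"
    using fin finite_subset [OF D_V fin] by simp_all
  have "?R \<inter> ?Y = {}"
    by blast
  then have "card ?R + card ?Y = card (?R \<union> ?Y)"
    using card_Un_disjoint [OF fin_R fin_Y] by simp
  also have "\<dots> \<le> card ?V"
    using D_V by (intro card_mono [OF fin]) blast
  finally have card_RY: "card ?R + card ?Y \<le> card ?V" .
  have R_Y: "\<forall>a\<in>?R. \<forall>b\<in>?Y. {a, b} \<notin> ?E"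
  proof (intro ballI)
    fix a b
    assume "a \<in> ?R" "b \<in> ?Y"
    then show "{a, b} \<notin> ?E"
      by (intro no_edge_beyond_boundary) auto
  qed
  obtain A B where AB: "A \<inter> B = {}" "A \<union> B = ?R \<union> ?Y"
      "\<forall>a\<in>A. \<forall>b\<in>B. {a, b} \<notin> ?E" "3 * card A \<le> 2 * card ?V" "3 * card B \<le> 2 * card ?V"
    using balanced_split_components [OF fin_Y Y_L comp_Y fin_R \<open>?R \<inter> ?Y = {}\<close>
        card_outside_large_set [OF fin D_V D(3)] card_RY R_Y] by blast
  have "?R \<union> ?Y = ?V - ?S"
    using D_V by (auto simp: boundary_def)
  moreover have "?S \<subseteq> ?V"
    using L(1) by (auto simp: boundary_def)
  ultimately have "sep_parts G ?S A B"
    using AB unfolding sep_parts_def by (simp; linarith)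
  then show ?thesis
    unfolding balanced_separator_def by blast
qed

section \<open>Search spaces of arbitrary orders\<close>

lemma average_le_Max:
  fixes f :: "'a \<Rightarrow> nat"
  assumes "finite V" "V \<noteq> {}"
  shows "(\<Sum>v\<in>V. real (f v)) / real (card V) \<le> real (Max (f ` V))"
proof -
  have "(\<Sum>v\<in>V. real (f v)) \<le> real (card V) * real (Max (f ` V))"
  proof (rule sum_bounded_above)
    fix v
    assume "v \<in> V"
    then show "real (f v) \<le> real (Max (f ` V))"
      using assms(1) by simp
  qed
  moreover have "0 < real (card V)"
    using assms by (simp add: card_gt_0_iff)
  ultimately show ?thesis
    by (simp add: pos_divide_le_eq mult.commute)
qed

lemma Max_le_real:
  fixes f :: "'a \<Rightarrow> nat"
  assumes "finite V" "V \<noteq> {}" "\<And>v. v \<in> V \<Longrightarrow> real (f v) \<le> b"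
  shows "real (Max (f ` V)) \<le> b"
proof -
  have "Max (f ` V) \<in> f ` V"
    using assms(1,2) by (intro Max_in) simp_all
  then obtain v where "v \<in> V" "Max (f ` V) = f v"
    by blast
  then show ?thesis
    using assms(3) by simp
qed

lemma third_le_average:
  fixes f :: "'a \<Rightarrow> nat" and k :: real
  assumes "finite V" "V \<noteq> {}" "D \<subseteq> V" "card V \<le> 3 * card D"
    and "0 \<le> k" "\<And>v. v \<in> D \<Longrightarrow> k \<le> real (f v)"
  shows "k / 3 \<le> (\<Sum>v\<in>V. real (f v)) / real (card V)"
proof -
  have "real (card V) * k \<le> (3 * real (card D)) * k"
    using assms(4,5) by (intro mult_right_mono) linarith+
  then have "real (card V) * (k / 3) \<le> real (card D) * k"
    by simp
  also have "\<dots> \<le> (\<Sum>v\<in>D. real (f v))"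
    using assms(6) by (rule sum_bounded_below)
  also have "\<dots> \<le> (\<Sum>v\<in>V. real (f v))"
    using assms(1,3) by (intro sum_mono2) simp_all
  finally have "real (card V) * (k / 3) \<le> (\<Sum>v\<in>V. real (f v))" .
  moreover have "0 < real (card V)"
    using assms(1,2) by (simp add: card_gt_0_iff)
  ultimately show ?thesis
    by (simp add: pos_le_divide_eq mult.commute)
qed

definition ascending_pairs :: "'a list \<Rightarrow> 'a set \<Rightarrow> ('a \<times> 'a) set" where
  "ascending_pairs xs N = {(a, b). a \<in> N \<and> b \<in> N \<and> rank xs a < rank xs b}"

lemma square_eq_ascending_pairs_Un:
  assumes xs: "distinct xs" and N: "N \<subseteq> set xs"
  shows "N \<times> N = (ascending_pairs xs N \<union> prod.swap ` ascending_pairs xs N) \<union> (\<lambda>a. (a, a)) ` N"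
    (is "_ = (?P \<union> ?Q) \<union> ?D")
proof (intro set_eqI iffI)
  fix p
  assume "p \<in> N \<times> N"
  then obtain a b where p: "p = (a, b)" "a \<in> N" "b \<in> N"
    by blast
  consider "rank xs a < rank xs b" | "rank xs b < rank xs a" | "rank xs a = rank xs b"
    by linarith
  then show "p \<in> (?P \<union> ?Q) \<union> ?D"
  proof cases
    case 1
    then show ?thesis
      using p by (simp add: ascending_pairs_def)
  next
    case 2
    then have "(b, a) \<in> ?P"
      using p by (simp add: ascending_pairs_def)
    moreover have "p = prod.swap (b, a)"
      using p by simp
    ultimately show ?thesis
      by blast
  next
    case 3
    then have "a = b"
      using rank_eq_iff [OF xs, of a b] p N by blast
    then show ?thesis
      using p by blast
  qed
next
  fix p
  assume "p \<in> (?P \<union> ?Q) \<union> ?D"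
  then show "p \<in> N \<times> N"
    by (auto simp: ascending_pairs_def)
qed

lemma card_ascending_pairs:
  assumes xs: "distinct xs" and N: "N \<subseteq> set xs"
  shows "2 * card (ascending_pairs xs N) + card N = card N * card N"
proof -
  let ?P = "ascending_pairs xs N" and ?Q = "prod.swap ` ascending_pairs xs N"
    and ?D = "(\<lambda>a. (a, a)) ` N"
  have fin: "finite N"
    using N by (rule finite_subset) simp
  have "?P \<subseteq> N \<times> N"
    by (auto simp: ascending_pairs_def)
  then have fin_P: "finite ?P" and fin_Q: "finite ?Q" and fin_D: "finite ?D"
    using fin by (auto intro: finite_subset [of _ "N \<times> N"])
  have "(?P \<union> ?Q) \<inter> ?D = {}" "?P \<inter> ?Q = {}"
    by (auto simp: ascending_pairs_def)
  moreover have "card ?Q = card ?P"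
    by (rule card_image [OF inj_swap])
  moreover have "card ?D = card N"
    by (rule card_image) (simp add: inj_on_def)
  ultimately have "card (N \<times> N) = card ?P + card ?P + card N"
    using fin_P fin_Q fin_D square_eq_ascending_pairs_Un [OF xs N] by (simp add: card_Un_disjoint)
  then show ?thesis
    by (simp add: card_cartesian_product)
qed

lemma card_ascending_pairs_lower:
  fixes k :: real
  assumes "distinct xs" "N \<subseteq> set xs" "0 \<le> k" "k + 1 \<le> real (card N)"
  shows "k\<^sup>2 / 2 \<le> real (card (ascending_pairs xs N))"
proof -
  have "real (2 * card (ascending_pairs xs N) + card N) = real (card N * card N)"
    using card_ascending_pairs [OF assms(1,2)] by (simp only:)
  then have "2 * real (card (ascending_pairs xs N)) = real (card N) * (real (card N) - 1)"
    by (simp add: algebra_simps)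
  also have "\<dots> \<ge> k * k"
    using assms(3,4) by (intro mult_mono) simp_all
  finally show ?thesis
    by (simp add: power2_eq_square)
qed

context ordered_graph
begin

lemma boundary_in_search_spaces:
  assumes x: "x \<in> set (take t \<pi>)" and v: "v \<in> component E (set (take t \<pi>)) x"
  defines "N \<equiv> boundary G (component E (set (take t \<pi>)) x)"
  shows "N \<subseteq> ss_verts G \<pi> v" and "ascending_pairs \<pi> N \<subseteq> ss_arcs G \<pi> v"
proof -
  let ?L = "set (take t \<pi>)"
  have comp_v: "component E ?L v = component E ?L x"
    using v by (rule component_eq)
  have comp_L: "component E ?L x \<subseteq> ?L"
    using x by (rule component_subset)
  have v_L: "v \<in> ?L"
    using v comp_L by blast
  have N: "w \<in> V" "?L \<subseteq> lower \<pi> w" "inner_path E ?L v w"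
    if w: "w \<in> N" for w
  proof -
    obtain d where "d \<in> component E ?L x" "{d, w} \<in> E" "w \<notin> component E ?L x" "w \<in> V"
      using w by (auto simp: N_def boundary_def)
    then have d: "d \<in> component E ?L v" "{d, w} \<in> E" "w \<notin> component E ?L x" "w \<in> V"
      using comp_v by simp_all
    have "w \<notin> ?L"
      using component_edge [OF d(1) _ _ d(2)] d(1,3) comp_v comp_L by blast
    then show "?L \<subseteq> lower \<pi> w"
      using d(4) by (auto simp: mem_set_take mem_lower)
    show "inner_path E ?L v w"
      using d(1,2) by (rule inner_path_component)
    show "w \<in> V"
      by (rule d(4))
  qed
  show verts: "N \<subseteq> ss_verts G \<pi> v"
  proof
    fix w
    assume w: "w \<in> N"
    have "v \<in> V" "r v < r w"
      using N(2) [OF w] v_L by (auto simp: mem_lower)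
    moreover have "inner_path E (lower \<pi> w) v w"
      using inner_path_mono [OF N(3) [OF w] N(2) [OF w]] .
    ultimately have "(v, w) \<in> (up_arcs G \<pi>)\<^sup>*"
      using N(1) [OF w] by (intro inner_path_imp_reachable)
    then show "w \<in> ss_verts G \<pi> v"
      by (simp add: ss_verts_def)
  qed
  show "ascending_pairs \<pi> N \<subseteq> ss_arcs G \<pi> v"
  proof
    fix p
    assume "p \<in> ascending_pairs \<pi> N"
    then obtain a b where p: "p = (a, b)" "a \<in> N" "b \<in> N" "r a < r b"
      by (auto simp: ascending_pairs_def)
    have "inner_path E ?L a b"
      using inner_path_trans [OF inner_path_sym [OF N(3) [OF p(2)]] v_L N(3) [OF p(3)]] .
    then have "inner_path E (lower \<pi> a) a b"
      using N(2) [OF p(2)] by (rule inner_path_mono)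
    then have "(a, b) \<in> up_arcs G \<pi>"
      using N(1) [OF p(2)] N(1) [OF p(3)] p(4) by (simp add: up_arc_iff)
    then show "p \<in> ss_arcs G \<pi> v"
      using verts p by (auto simp: ss_arcs_def)
  qed
qed

lemma first_large_component:
  assumes conn: "connected_graph G" and ne: "V \<noteq> {}"
  obtains t x where "t < length \<pi>" "x \<in> set (take (Suc t) \<pi>)"
    "card V \<le> 3 * card (component E (set (take (Suc t) \<pi>)) x)"
    "\<forall>y\<in>set (take t \<pi>). 3 * card (component E (set (take t \<pi>)) y) \<le> card V"
proof -
  define large where
    "large k \<longleftrightarrow> (\<exists>x\<in>set (take k \<pi>). card V \<le> 3 * card (component E (set (take k \<pi>)) x))"
    for k
  obtain x where x: "x \<in> V"
    using ne by blast
  have "card V \<le> 3 * card (component E V x)"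
    using component_connected_graph [OF wf conn x] by simp
  moreover have "set (take (length \<pi>) \<pi>) = V"
    using set_order by simp
  ultimately have "large (length \<pi>)"
    unfolding large_def using x by auto
  then have least: "large (LEAST k. large k)" "(LEAST k. large k) \<le> length \<pi>"
    by (rule LeastI, rule Least_le)
  have "\<not> large 0"
    by (simp add: large_def)
  then obtain t where t: "(LEAST k. large k) = Suc t"
    using least(1) by (metis not0_implies_Suc)
  then have "\<not> large t"
    by (metis lessI not_less_Least)
  then have small: "\<forall>y\<in>set (take t \<pi>). 3 * card (component E (set (take t \<pi>)) y) \<le> card V"
    unfolding large_def by (meson less_imp_le not_le)
  obtain x where "x \<in> set (take (Suc t) \<pi>)"
    "card V \<le> 3 * card (component E (set (take (Suc t) \<pi>)) x)"
    using least(1) t unfolding large_def by auto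
  moreover have "t < length \<pi>"
    using least(2) t by simp
  ultimately show ?thesis
    using that small by blast
qed

lemma separator_in_search_spaces:
  assumes "connected_graph G" "V \<noteq> {}"
  obtains D u N where "D \<subseteq> V" "card V \<le> 3 * card D" "balanced_separator G (insert u N)"
    "\<And>v. v \<in> D \<Longrightarrow> N \<subseteq> ss_verts G \<pi> v \<and> ascending_pairs \<pi> N \<subseteq> ss_arcs G \<pi> v"
proof -
  obtain t x where t: "t < length \<pi>" and x: "x \<in> set (take (Suc t) \<pi>)"
    and large: "card V \<le> 3 * card (component E (set (take (Suc t) \<pi>)) x)"
    and small: "\<forall>y\<in>set (take t \<pi>). 3 * card (component E (set (take t \<pi>)) y) \<le> card V"
    using first_large_component [OF assms] by blast
  let ?D = "component E (set (take (Suc t) \<pi>)) x"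
  have step: "set (take (Suc t) \<pi>) = insert (\<pi> ! t) (set (take t \<pi>))"
    using take_Suc_conv_app_nth [OF t] by simp
  have new: "\<pi> ! t \<notin> set (take t \<pi>)"
    using rank_nth [OF distinct_order t] by (simp add: mem_set_take)
  have sub: "insert (\<pi> ! t) (set (take t \<pi>)) \<subseteq> V"
    using set_take_subset [of "Suc t" \<pi>] step set_order by simp
  have "balanced_separator G
      (insert (\<pi> ! t) (boundary G (component E (insert (\<pi> ! t) (set (take t \<pi>))) x)))"
    by (rule balanced_separator_boundary [OF wf sub new refl]) (use x large small step in simp_all)
  then have sep: "balanced_separator G (insert (\<pi> ! t) (boundary G ?D))"
    by (simp only: step)
  have "?D \<subseteq> set (take (Suc t) \<pi>)"
    by (rule component_subset [OF x])
  also have "\<dots> \<subseteq> V"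
    using set_take_subset [of "Suc t" \<pi>] set_order by simp
  finally show ?thesis
    using that [OF _ large sep] boundary_in_search_spaces [OF x] by blast
qed

lemma avg_ss_lower_bounds:
  assumes "connected_graph G" "V \<noteq> {}"
    and sep: "\<forall>S. balanced_separator G S \<longrightarrow> s \<le> real (card S)" and s: "4 \<le> s"
  shows "s / 6 \<le> avg_ss_verts G \<pi>" and "s\<^sup>2 / 24 \<le> avg_ss_arcs G \<pi>"
proof -
  obtain D u N where D: "D \<subseteq> V" "card V \<le> 3 * card D"
    and sep_N: "balanced_separator G (insert u N)"
    and in_ss: "\<And>v. v \<in> D \<Longrightarrow> N \<subseteq> ss_verts G \<pi> v \<and> ascending_pairs \<pi> N \<subseteq> ss_arcs G \<pi> v"
    using separator_in_search_spaces [OF assms(1,2)] by blast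
  have fin: "finite V"
    using wf by (simp add: wf_graph_def)
  have N_V: "N \<subseteq> V"
    using sep_N by (auto simp: balanced_separator_def sep_parts_def)
  have "s \<le> real (card (insert u N))"
    using sep sep_N by blast
  also have "\<dots> \<le> real (card N) + 1"
    using card_insert_le_m1 [of "card N + 1" N u] by simp
  finally have card_N: "s / 2 + 1 \<le> real (card N)"
    using s by linarith
  let ?P = "ascending_pairs \<pi> N"
  have "(s / 2)\<^sup>2 / 2 \<le> real (card ?P)"
    using card_ascending_pairs_lower [OF distinct_order _ _ card_N] N_V set_order s by simp
  then have card_pairs: "s\<^sup>2 / 8 \<le> real (card ?P)"
    by (simp add: power_divide)
  have "s / 2 / 3 \<le> avg_ss_verts G \<pi>"
    unfolding avg_ss_verts_def
  proof (rule third_le_average [OF fin assms(2) D])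
    show "0 \<le> s / 2"
      using s by simp
    fix v
    assume "v \<in> D"
    then have "card N \<le> card (ss_verts G \<pi> v)"
      using in_ss finite_ss_verts by (intro card_mono) simp_all
    then show "s / 2 \<le> real (card (ss_verts G \<pi> v))"
      using card_N by linarith
  qed
  then show "s / 6 \<le> avg_ss_verts G \<pi>"
    by simp
  have "s\<^sup>2 / 8 / 3 \<le> avg_ss_arcs G \<pi>"
    unfolding avg_ss_arcs_def
  proof (rule third_le_average [OF fin assms(2) D])
    show "0 \<le> s\<^sup>2 / 8"
      by simp
    fix v
    assume "v \<in> D"
    then have "card ?P \<le> card (ss_arcs G \<pi> v)"
      using in_ss finite_ss_arcs by (intro card_mono) simp_all
    then show "s\<^sup>2 / 8 \<le> real (card (ss_arcs G \<pi> v))"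
      using card_pairs by linarith
  qed
  then show "s\<^sup>2 / 24 \<le> avg_ss_arcs G \<pi>"
    by simp
qed

end

section \<open>Nested dissection against arbitrary orders\<close>

lemma nd_order_max_ss_bounds:
  fixes \<alpha> c :: real
  assumes K: "subgraph_closed K"
    and sep: "\<forall>H\<in>K. \<exists>S. balanced_separator H S \<and> real (card S) \<le> c * real (card (verts H)) powr \<alpha>"
    and \<alpha>: "0 < \<alpha>" and c: "0 \<le> c"
    and nd: "nd_order G l" and G: "G \<in> K" "verts G \<noteq> {}"
  defines "b \<equiv> c / (1 - (2/3) powr \<alpha>) * real (card (verts G)) powr \<alpha>"
  shows "max_ss_verts G l \<le> b" and "max_ss_arcs G l \<le> b\<^sup>2"
proof -
  have wf: "wf_graph G"
    using K G(1) by (auto simp: subgraph_closed_def)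
  interpret ordered_graph G l
    using wf vertex_order_nd_order [OF nd] by unfold_locales
  have fin: "finite (verts G)"
    using wf by (simp add: wf_graph_def)
  have verts: "real (card (ss_verts G l v)) \<le> b" if "v \<in> verts G" for v
    unfolding b_def using nd_order_ss_verts_bound [OF K sep \<alpha> c nd G(1) that] .
  show "max_ss_verts G l \<le> b"
    unfolding max_ss_verts_def by (rule Max_le_real [OF fin G(2) verts])
  have "real (card (ss_arcs G l v)) \<le> b\<^sup>2" if "v \<in> verts G" for v
  proof -
    have "real (card (ss_arcs G l v)) \<le> (real (card (ss_verts G l v)))\<^sup>2"
      using card_ss_arcs_le [of v] by (simp flip: of_nat_power)
    also have "\<dots> \<le> b\<^sup>2"
      using verts [OF that] by (intro power_mono) auto
    finally show ?thesis .
  qed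
  then show "max_ss_arcs G l \<le> b\<^sup>2"
    unfolding max_ss_arcs_def by (rule Max_le_real [OF fin G(2)])
qed

lemma nd_order_competitive:
  fixes \<alpha> c c' :: real
  assumes K: "subgraph_closed K"
    and sep: "\<forall>H\<in>K. \<exists>S. balanced_separator H S \<and> real (card S) \<le> c * real (card (verts H)) powr \<alpha>"
    and \<alpha>: "0 < \<alpha>" and c: "0 \<le> c"
    and G: "G \<in> K" "connected_graph G" "verts G \<noteq> {}"
    and sep_G: "\<forall>S. balanced_separator G S \<longrightarrow> c' * real (card (verts G)) powr \<alpha> \<le> real (card S)"
    and large: "4 \<le> c' * real (card (verts G)) powr \<alpha>"
    and nd: "nd_order G \<pi>nd" and \<pi>: "vertex_order G \<pi>"
  defines "D \<equiv> c / (1 - (2/3) powr \<alpha>)"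
  defines "C \<equiv> max (6 * D / c') (24 * D\<^sup>2 / c'\<^sup>2)"
  shows "max_ss_verts G \<pi>nd \<le> C * max_ss_verts G \<pi> \<and> max_ss_arcs G \<pi>nd \<le> C * max_ss_arcs G \<pi> \<and>
    avg_ss_verts G \<pi>nd \<le> C * avg_ss_verts G \<pi> \<and> avg_ss_arcs G \<pi>nd \<le> C * avg_ss_arcs G \<pi>"
proof -
  let ?m = "real (card (verts G)) powr \<alpha>"
  have wf: "wf_graph G"
    using K G(1) by (auto simp: subgraph_closed_def)
  interpret ordered_graph G \<pi>
    using wf \<pi> by unfold_locales
  have fin: "finite (verts G)"
    using wf by (simp add: wf_graph_def)
  have c': "0 < c'"
  proof (rule ccontr)
    assume "\<not> 0 < c'"
    then have "c' * ?m \<le> 0"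
      using mult_nonpos_nonneg [of c' ?m] by simp
    then show False
      using large by simp
  qed
  have D: "0 \<le> D"
    unfolding D_def using c two_thirds_powr_less_one [OF \<alpha>] by simp
  have C_ge: "6 * D / c' \<le> C" "24 * D\<^sup>2 / c'\<^sup>2 \<le> C"
    unfolding C_def by simp_all
  then have C: "0 \<le> C"
    using D c' by (meson divide_nonneg_pos mult_nonneg_nonneg order_trans zero_le_numeral)
  have nd_bounds: "max_ss_verts G \<pi>nd \<le> D * ?m" "max_ss_arcs G \<pi>nd \<le> (D * ?m)\<^sup>2"
    using nd_order_max_ss_bounds [OF K sep \<alpha> c nd G(1,3)] unfolding D_def by auto
  have avg_le_max: "avg_ss_verts G l \<le> max_ss_verts G l" "avg_ss_arcs G l \<le> max_ss_arcs G l" for l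
    unfolding avg_ss_verts_def max_ss_verts_def avg_ss_arcs_def max_ss_arcs_def
    by (simp_all add: average_le_Max [OF fin G(3)])
  have "D * ?m = 6 * D / c' * (c' * ?m / 6)"
    using c' by simp
  also have "\<dots> \<le> C * avg_ss_verts G \<pi>"
    using C_ge(1) avg_ss_lower_bounds(1) [OF G(2,3) sep_G] large C
    by (intro mult_mono) simp_all
  finally have verts: "D * ?m \<le> C * avg_ss_verts G \<pi>" .
  have "(D * ?m)\<^sup>2 = 24 * D\<^sup>2 / c'\<^sup>2 * ((c' * ?m)\<^sup>2 / 24)"
    using c' by (simp add: power_mult_distrib)
  also have "\<dots> \<le> C * avg_ss_arcs G \<pi>"
    using C_ge(2) avg_ss_lower_bounds(2) [OF G(2,3) sep_G] large C
    by (intro mult_mono) simp_all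
  finally have arcs: "(D * ?m)\<^sup>2 \<le> C * avg_ss_arcs G \<pi>" .
  show ?thesis
    using nd_bounds verts arcs avg_le_max [of \<pi>nd] mult_left_mono [OF avg_le_max(1) [of \<pi>] C]
      mult_left_mono [OF avg_le_max(2) [of \<pi>] C]
    by (intro conjI) linarith+
qed

lemma le_powr_of_ceiling_root:
  fixes \<alpha> b :: real
  assumes "0 < \<alpha>" "0 < b" "nat \<lceil>b powr (1 / \<alpha>)\<rceil> \<le> n"
  shows "b \<le> real n powr \<alpha>"
proof -
  have "b powr (1 / \<alpha>) \<le> real n"
    using assms(3) by linarith
  then have "(b powr (1 / \<alpha>)) powr \<alpha> \<le> real n powr \<alpha>"
    using assms(1) by (intro powr_mono2) auto
  then show ?thesis
    using assms(1,2) by (simp add: powr_powr)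
qed

theorem mainTheorem3:
  fixes \<alpha> c c' :: real
  assumes "0 < \<alpha>" and "\<alpha> < 1" and "c > 0" and "c' > 0"
  shows "\<exists>(C::real) (n0::nat). \<forall>K :: nat ugraph set.
     subgraph_closed K \<and>
     (\<forall>H\<in>K. \<exists>S. balanced_separator H S \<and> real (card S) \<le> c * real (card (verts H)) powr \<alpha>)
     \<longrightarrow> (\<forall>G\<in>K. connected_graph G \<and> card (verts G) \<ge> n0 \<and>
           (\<forall>S. balanced_separator G S \<longrightarrow> real (card S) \<ge> c' * real (card (verts G)) powr \<alpha>)
           \<longrightarrow> (\<forall>\<pi>nd \<pi>. nd_order G \<pi>nd \<and> vertex_order G \<pi> \<longrightarrow>
                  max_ss_verts G \<pi>nd \<le> C * max_ss_verts G \<pi> \<and>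
                  max_ss_arcs G \<pi>nd \<le> C * max_ss_arcs G \<pi> \<and>
                  avg_ss_verts G \<pi>nd \<le> C * avg_ss_verts G \<pi> \<and>
                  avg_ss_arcs G \<pi>nd \<le> C * avg_ss_arcs G \<pi>))"
proof -
  define D where "D = c / (1 - (2/3) powr \<alpha>)"
  define n0 where "n0 = nat \<lceil>(4 / c') powr (1 / \<alpha>)\<rceil> + 1"
  have large: "4 \<le> c' * real n powr \<alpha>" if "n0 \<le> n" for n
  proof -
    have "nat \<lceil>(4 / c') powr (1 / \<alpha>)\<rceil> \<le> n"
      using that unfolding n0_def by linarith
    then have "4 / c' \<le> real n powr \<alpha>"
      using le_powr_of_ceiling_root [OF assms(1)] assms(4) by simp
    then show ?thesis
      using assms(4) by (simp add: field_simps)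
  qed
  show ?thesis
  proof (intro exI [of _ "max (6 * D / c') (24 * D\<^sup>2 / c'\<^sup>2)"] exI [of _ n0] allI impI ballI,
      elim conjE)
    fix K G \<pi>nd \<pi>
    assume K: "subgraph_closed K" and G: "G \<in> K" "connected_graph G" "n0 \<le> card (verts G)"
      and sep: "\<forall>H\<in>K. \<exists>S. balanced_separator H S \<and> real (card S) \<le> c * real (card (verts H)) powr \<alpha>"
      and sep_G: "\<forall>S. balanced_separator G S \<longrightarrow> c' * real (card (verts G)) powr \<alpha> \<le> real (card S)"
      and orders: "nd_order G \<pi>nd" "vertex_order G \<pi>"
    have "verts G \<noteq> {}"
      using G(3) by (auto simp: n0_def)
    from nd_order_competitive [OF K sep assms(1) less_imp_le [OF assms(3)] G(1,2) this sep_G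
        large [OF G(3)] orders]
    show "max_ss_verts G \<pi>nd \<le> max (6 * D / c') (24 * D\<^sup>2 / c'\<^sup>2) * max_ss_verts G \<pi> \<and>
        max_ss_arcs G \<pi>nd \<le> max (6 * D / c') (24 * D\<^sup>2 / c'\<^sup>2) * max_ss_arcs G \<pi> \<and>
        avg_ss_verts G \<pi>nd \<le> max (6 * D / c') (24 * D\<^sup>2 / c'\<^sup>2) * avg_ss_verts G \<pi> \<and>
        avg_ss_arcs G \<pi>nd \<le> max (6 * D / c') (24 * D\<^sup>2 / c'\<^sup>2) * avg_ss_arcs G \<pi>"
      unfolding D_def .
  qed
qed

end
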